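(* Let $I\subseteq F\{U\}$ and $J\subseteq F\{V\}$ be characterizable differential ideals and let $\varphi:\mathrm{quot}(F\{U\}/I)\to\mathrm{quot}(F\{V\}/J)$ be a differential birational map. Then there exists $\ell_0\in\mathbb{Z}_{\ge0}$ such that for all $\ell\in\mathbb{Z}_{\ge0}$, $\varphi\big(\mathrm{quot}(F\{U\}_{\le\ell}/I_{\le\ell})\big)\subseteq\mathrm{quot}(F\{V\}_{\le\ell+\ell_0}/J_{\le\ell+\ell_0})$, where $\mathrm{quot}(F\{U\}_{\le\ell}/I_{\le\ell})$ is regarded as a subring of $\mathrm{quot}(F\{U\}/I)$ and $\mathrm{quot}(F\{V\}_{\le k}/J_{\le k})$ as a subring of $\mathrm{quot}(F\{V\}/J)$ via the canonical (injective) maps.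
   Context: $F$ is a differential field of characteristic zero with finitely many pairwise commuting derivations $\Delta$; $F\{U\}$, $F\{V\}$ are differential polynomial rings in finitely many differential indeterminates; $F\{U\}_{\le\ell}$ is the subring of polynomials in derivatives of order at most $\ell$ and $I_{\le\ell}:=I\cap F\{U\}_{\le\ell}$ (similarly for $J$). $\mathrm{quot}(R)$ is the total quotient ring. A differential birational map from $F\{U\}/I$ to $F\{V\}/J$ is an $F$-algebra isomorphism $\mathrm{quot}(F\{U\}/I)\to\mathrm{quot}(F\{V\}/J)$ commuting with the derivations. A differential ideal is characterizable if it equals $\mathcal{I}(S)=\langle S\rangle_\Delta:(\mathrm{ini}(S)\cup\mathrm{sep}(S))^\infty$ for a differential regular chain $S$ with respect to an orderly ranking (finite, weakly triangular, coherent in Rosenfeld's sense, and for each leader $x$ the initial and separant of $S_x$ are not zero divisors modulo $\mathcal{I}(S_{<x})$). *)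

theory Defs
  imports "HOL-Library.Poly_Mapping"
begin

text \<open>The derivations Delta = {delta_0, ..., delta_(m-1)} are indexed by i < m.
  A derivative variable theta u is a pair (u, alpha) where alpha is a list of
  length m (the multi-index).\<close>

type_synonym 'u dvar = "'u \<times> nat list"
type_synonym ('f, 'u) dpoly = "('u dvar \<Rightarrow>\<^sub>0 nat) \<Rightarrow>\<^sub>0 'f"

definition dvars :: "nat \<Rightarrow> 'u dvar set" where
  "dvars m = {v. length (snd v) = m}"

definition vord :: "'u dvar \<Rightarrow> nat" where
  "vord v = sum_list (snd v)"

definition vshift :: "nat \<Rightarrow> 'u dvar \<Rightarrow> 'u dvar" where
  "vshift i v = (fst v, (snd v)[i := snd v ! i + 1])"

definition vtheta :: "nat list \<Rightarrow> 'u dvar \<Rightarrow> 'u dvar" where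
  "vtheta mu v = (fst v, map2 (+) mu (snd v))"

definition is_vderiv :: "'u dvar \<Rightarrow> 'u dvar \<Rightarrow> bool" where
  "is_vderiv w v \<longleftrightarrow> fst w = fst v \<and> list_all2 (\<le>) (snd v) (snd w)"

definition pvars :: "('f::zero, 'u) dpoly \<Rightarrow> 'u dvar set" where
  "pvars p = \<Union> (Poly_Mapping.keys ` Poly_Mapping.keys p)"

definition Var :: "'u dvar \<Rightarrow> ('f::{zero,one}, 'u) dpoly" where
  "Var v = Poly_Mapping.single (Poly_Mapping.single v 1) 1"

definition Const :: "'f::zero \<Rightarrow> ('f, 'u) dpoly" where
  "Const c = Poly_Mapping.single 0 c"

definition dring :: "nat \<Rightarrow> ('f::zero, 'u) dpoly set" where
  "dring m = {p. pvars p \<subseteq> dvars m}"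

definition dring_le :: "nat \<Rightarrow> nat \<Rightarrow> ('f::zero, 'u) dpoly set" where
  "dring_le m l = {p. pvars p \<subseteq> {v \<in> dvars m. vord v \<le> l}}"

definition pdiff :: "'u dvar \<Rightarrow> ('f::comm_ring_1, 'u) dpoly \<Rightarrow> ('f, 'u) dpoly" where
  "pdiff v p = (\<Sum>mo\<in>Poly_Mapping.keys p.
      Poly_Mapping.single (mo - Poly_Mapping.single v 1) (Poly_Mapping.lookup p mo * of_nat (Poly_Mapping.lookup mo v)))"

definition dder :: "(nat \<Rightarrow> 'f \<Rightarrow> 'f) \<Rightarrow> nat \<Rightarrow> ('f::comm_ring_1, 'u) dpoly \<Rightarrow> ('f, 'u) dpoly" where
  "dder \<delta> i p = Poly_Mapping.map (\<delta> i) p + (\<Sum>v\<in>pvars p. pdiff v p * Var (vshift i v))"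

definition dtheta :: "(nat \<Rightarrow> 'f \<Rightarrow> 'f) \<Rightarrow> nat list \<Rightarrow> ('f::comm_ring_1, 'u) dpoly \<Rightarrow> ('f, 'u) dpoly" where
  "dtheta \<delta> mu p = foldr (\<lambda>i q. (dder \<delta> i ^^ (mu ! i)) q) [0..<length mu] p"

text \<open>F is a differential field with m pairwise commuting derivations
  (characteristic zero is imposed by the type class field_char_0).\<close>
definition diff_field :: "nat \<Rightarrow> (nat \<Rightarrow> 'f::field \<Rightarrow> 'f) \<Rightarrow> bool" where
  "diff_field m \<delta> \<longleftrightarrow>
     (\<forall>i<m. \<forall>a b. \<delta> i (a + b) = \<delta> i a + \<delta> i b) \<and>
     (\<forall>i<m. \<forall>a b. \<delta> i (a * b) = a * \<delta> i b + \<delta> i a * b) \<and>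
     (\<forall>i<m. \<forall>j<m. \<forall>a. \<delta> i (\<delta> j a) = \<delta> j (\<delta> i a))"

definition is_ideal :: "'a::comm_ring_1 set \<Rightarrow> 'a set \<Rightarrow> bool" where
  "is_ideal R I \<longleftrightarrow> I \<subseteq> R \<and> 0 \<in> I \<and> (\<forall>a\<in>I. \<forall>b\<in>I. a + b \<in> I) \<and> (\<forall>a\<in>I. \<forall>r\<in>R. r * a \<in> I)"

definition ideal_gen :: "'a::comm_ring_1 set \<Rightarrow> 'a set \<Rightarrow> 'a set" where
  "ideal_gen R S = \<Inter>{I. is_ideal R I \<and> S \<subseteq> I}"

definition is_diff_ideal :: "nat \<Rightarrow> (nat \<Rightarrow> 'f \<Rightarrow> 'f) \<Rightarrow> ('f::comm_ring_1, 'u) dpoly set \<Rightarrow> bool" where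
  "is_diff_ideal m \<delta> I \<longleftrightarrow> is_ideal (dring m) I \<and> (\<forall>i<m. \<forall>p\<in>I. dder \<delta> i p \<in> I)"

definition diff_ideal_gen :: "nat \<Rightarrow> (nat \<Rightarrow> 'f \<Rightarrow> 'f) \<Rightarrow> ('f::comm_ring_1, 'u) dpoly set \<Rightarrow> ('f, 'u) dpoly set" where
  "diff_ideal_gen m \<delta> S = \<Inter>{I. is_diff_ideal m \<delta> I \<and> S \<subseteq> I}"

definition saturation :: "'a::comm_ring_1 set \<Rightarrow> 'a set \<Rightarrow> 'a set \<Rightarrow> 'a set" where
  "saturation R I H = {p \<in> R. \<exists>hs. set hs \<subseteq> H \<and> prod_list hs * p \<in> I}"

definition nzd_mod :: "'a::comm_ring_1 set \<Rightarrow> 'a set \<Rightarrow> 'a \<Rightarrow> bool" where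
  "nzd_mod R I b \<longleftrightarrow> b \<in> R \<and> (\<forall>q\<in>R. b * q \<in> I \<longrightarrow> q \<in> I)"

definition orderly_ranking :: "nat \<Rightarrow> ('u dvar \<Rightarrow> 'u dvar \<Rightarrow> bool) \<Rightarrow> bool" where
  "orderly_ranking m r \<longleftrightarrow>
     (\<forall>v\<in>dvars m. \<not> r v v) \<and>
     (\<forall>u\<in>dvars m. \<forall>v\<in>dvars m. \<forall>w\<in>dvars m. r u v \<longrightarrow> r v w \<longrightarrow> r u w) \<and>
     (\<forall>v\<in>dvars m. \<forall>w\<in>dvars m. v \<noteq> w \<longrightarrow> r v w \<or> r w v) \<and>
     (\<forall>v\<in>dvars m. \<forall>i<m. r v (vshift i v)) \<and>
     (\<forall>v\<in>dvars m. \<forall>w\<in>dvars m. \<forall>i<m. r v w \<longrightarrow> r (vshift i v) (vshift i w)) \<and>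
     (\<forall>v\<in>dvars m. \<forall>w\<in>dvars m. vord v < vord w \<longrightarrow> r v w)"

definition leader :: "('u dvar \<Rightarrow> 'u dvar \<Rightarrow> bool) \<Rightarrow> ('f::zero, 'u) dpoly \<Rightarrow> 'u dvar" where
  "leader r p = (THE v. v \<in> pvars p \<and> (\<forall>w\<in>pvars p. w \<noteq> v \<longrightarrow> r w v))"

definition vdeg :: "'u dvar \<Rightarrow> ('f::zero, 'u) dpoly \<Rightarrow> nat" where
  "vdeg v p = Max (insert 0 ((\<lambda>mo. Poly_Mapping.lookup mo v) ` Poly_Mapping.keys p))"

definition initial :: "('u dvar \<Rightarrow> 'u dvar \<Rightarrow> bool) \<Rightarrow> ('f::comm_ring_1, 'u) dpoly \<Rightarrow> ('f, 'u) dpoly" where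
  "initial r p = (let v = leader r p; d = vdeg v p in
     (\<Sum>mo\<in>{mo\<in>Poly_Mapping.keys p. Poly_Mapping.lookup mo v = d}. Poly_Mapping.single (mo - Poly_Mapping.single v d) (Poly_Mapping.lookup p mo)))"

definition separant :: "('u dvar \<Rightarrow> 'u dvar \<Rightarrow> bool) \<Rightarrow> ('f::comm_ring_1, 'u) dpoly \<Rightarrow> ('f, 'u) dpoly" where
  "separant r p = pdiff (leader r p) p"

definition HS :: "('u dvar \<Rightarrow> 'u dvar \<Rightarrow> bool) \<Rightarrow> ('f::comm_ring_1, 'u) dpoly set \<Rightarrow> ('f, 'u) dpoly set" where
  "HS r S = initial r ` S \<union> separant r ` S"

definition charI :: "nat \<Rightarrow> (nat \<Rightarrow> 'f \<Rightarrow> 'f) \<Rightarrow> ('u dvar \<Rightarrow> 'u dvar \<Rightarrow> bool)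
    \<Rightarrow> ('f::comm_ring_1, 'u) dpoly set \<Rightarrow> ('f, 'u) dpoly set" where
  "charI m \<delta> r S = saturation (dring m) (diff_ideal_gen m \<delta> S) (HS r S)"

definition weak_d_triangular :: "nat \<Rightarrow> ('u dvar \<Rightarrow> 'u dvar \<Rightarrow> bool) \<Rightarrow> ('f::zero, 'u) dpoly set \<Rightarrow> bool" where
  "weak_d_triangular m r S \<longleftrightarrow> finite S \<and> S \<subseteq> dring m \<and> (\<forall>a\<in>S. pvars a \<noteq> {}) \<and>
     (\<forall>a\<in>S. \<forall>b\<in>S. a \<noteq> b \<longrightarrow> \<not> is_vderiv (leader r a) (leader r b))"

text \<open>Rosenfeld coherence: for a, b in S whose leaders theta_a u, theta_b u have a common
  derivative theta_ab u (the least one), the Delta-polynomial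
  s_b theta_ab/theta_a a - s_a theta_ab/theta_b b lies in
  (Theta S_{< theta_ab u}) : H_S^infinity (algebraic ideal).\<close>
definition rosenfeld_coherent :: "nat \<Rightarrow> (nat \<Rightarrow> 'f \<Rightarrow> 'f) \<Rightarrow> ('u dvar \<Rightarrow> 'u dvar \<Rightarrow> bool)
    \<Rightarrow> ('f::comm_ring_1, 'u) dpoly set \<Rightarrow> bool" where
  "rosenfeld_coherent m \<delta> r S \<longleftrightarrow>
     (\<forall>a\<in>S. \<forall>b\<in>S. fst (leader r a) = fst (leader r b) \<longrightarrow>
        (let \<alpha> = snd (leader r a); \<beta> = snd (leader r b); \<gamma> = map2 max \<alpha> \<beta>;
             w = (fst (leader r a), \<gamma>);
             low = {dtheta \<delta> \<mu> c | \<mu> c. c \<in> S \<and> length \<mu> = m \<and> r (vtheta \<mu> (leader r c)) w}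
         in separant r b * dtheta \<delta> (map2 (-) \<gamma> \<alpha>) a - separant r a * dtheta \<delta> (map2 (-) \<gamma> \<beta>) b
              \<in> saturation (dring m) (ideal_gen (dring m) low) (HS r S)))"

definition diff_regular_chain :: "nat \<Rightarrow> (nat \<Rightarrow> 'f \<Rightarrow> 'f) \<Rightarrow> ('u dvar \<Rightarrow> 'u dvar \<Rightarrow> bool)
    \<Rightarrow> ('f::comm_ring_1, 'u) dpoly set \<Rightarrow> bool" where
  "diff_regular_chain m \<delta> r S \<longleftrightarrow> weak_d_triangular m r S \<and> rosenfeld_coherent m \<delta> r S \<and>
     (\<forall>a\<in>S. let x = leader r a; Sx = {b\<in>S. r (leader r b) x} in
        nzd_mod (dring m) (charI m \<delta> r Sx) (initial r a) \<and>
        nzd_mod (dring m) (charI m \<delta> r Sx) (separant r a))"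

definition characterizable :: "nat \<Rightarrow> (nat \<Rightarrow> 'f \<Rightarrow> 'f) \<Rightarrow> ('f::comm_ring_1, 'u) dpoly set \<Rightarrow> bool" where
  "characterizable m \<delta> I \<longleftrightarrow>
     (\<exists>r S. orderly_ranking m r \<and> diff_regular_chain m \<delta> r S \<and> I = charI m \<delta> r S)"

text \<open>quot(R/I): classes of fractions a/b with a in R and b not a zero divisor modulo I.\<close>
definition frac_rel :: "'a::comm_ring_1 set \<Rightarrow> 'a set \<Rightarrow> (('a \<times> 'a) \<times> ('a \<times> 'a)) set" where
  "frac_rel R I = {((a, b), (c, d)). a \<in> R \<and> c \<in> R \<and> nzd_mod R I b \<and> nzd_mod R I d \<and> a * d - c * b \<in> I}"

definition fclass :: "'a::comm_ring_1 set \<Rightarrow> 'a set \<Rightarrow> 'a \<Rightarrow> 'a \<Rightarrow> ('a \<times> 'a) set" where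
  "fclass R I a b = frac_rel R I `` {(a, b)}"

definition tquot :: "'a::comm_ring_1 set \<Rightarrow> 'a set \<Rightarrow> ('a \<times> 'a) set set" where
  "tquot R I = {fclass R I a b | a b. a \<in> R \<and> nzd_mod R I b}"

definition qadd :: "'a::comm_ring_1 set \<Rightarrow> 'a set \<Rightarrow> ('a \<times> 'a) set \<Rightarrow> ('a \<times> 'a) set \<Rightarrow> ('a \<times> 'a) set" where
  "qadd R I X Y = \<Union>{fclass R I (a * d + c * b) (b * d) | a b c d. (a, b) \<in> X \<and> (c, d) \<in> Y}"

definition qmul :: "'a::comm_ring_1 set \<Rightarrow> 'a set \<Rightarrow> ('a \<times> 'a) set \<Rightarrow> ('a \<times> 'a) set \<Rightarrow> ('a \<times> 'a) set" where
  "qmul R I X Y = \<Union>{fclass R I (a * c) (b * d) | a b c d. (a, b) \<in> X \<and> (c, d) \<in> Y}"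

definition qder :: "nat \<Rightarrow> (nat \<Rightarrow> 'f \<Rightarrow> 'f) \<Rightarrow> nat \<Rightarrow> ('f::comm_ring_1, 'u) dpoly set
    \<Rightarrow> (('f, 'u) dpoly \<times> ('f, 'u) dpoly) set \<Rightarrow> (('f, 'u) dpoly \<times> ('f, 'u) dpoly) set" where
  "qder m \<delta> i I X = \<Union>{fclass (dring m) I (dder \<delta> i a * b - a * dder \<delta> i b) (b * b) | a b. (a, b) \<in> X}"

text \<open>quot(F{U}/I) and the image of quot(F{U}_{<=l}/I_{<=l}) under the canonical map\<close>
definition dquot :: "nat \<Rightarrow> ('f::comm_ring_1, 'u) dpoly set \<Rightarrow> (('f, 'u) dpoly \<times> ('f, 'u) dpoly) set set" where
  "dquot m I = tquot (dring m) I"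

definition dquot_le :: "nat \<Rightarrow> ('f::comm_ring_1, 'u) dpoly set \<Rightarrow> nat \<Rightarrow> (('f, 'u) dpoly \<times> ('f, 'u) dpoly) set set" where
  "dquot_le m I l = {fclass (dring m) I a b | a b.
      a \<in> dring_le m l \<and> nzd_mod (dring_le m l) (I \<inter> dring_le m l) b \<and> nzd_mod (dring m) I b}"

definition diff_birational :: "nat \<Rightarrow> (nat \<Rightarrow> 'f \<Rightarrow> 'f) \<Rightarrow> ('f::comm_ring_1, 'u) dpoly set \<Rightarrow> ('f, 'v) dpoly set
    \<Rightarrow> ((('f, 'u) dpoly \<times> ('f, 'u) dpoly) set \<Rightarrow> (('f, 'v) dpoly \<times> ('f, 'v) dpoly) set) \<Rightarrow> bool" where
  "diff_birational m \<delta> I J \<phi> \<longleftrightarrow>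
     bij_betw \<phi> (dquot m I) (dquot m J) \<and>
     (\<forall>X\<in>dquot m I. \<forall>Y\<in>dquot m I. \<phi> (qadd (dring m) I X Y) = qadd (dring m) J (\<phi> X) (\<phi> Y)) \<and>
     (\<forall>X\<in>dquot m I. \<forall>Y\<in>dquot m I. \<phi> (qmul (dring m) I X Y) = qmul (dring m) J (\<phi> X) (\<phi> Y)) \<and>
     (\<forall>c. \<phi> (fclass (dring m) I (Const c) 1) = fclass (dring m) J (Const c) 1) \<and>
     (\<forall>i<m. \<forall>X\<in>dquot m I. \<phi> (qder m \<delta> i I X) = qder m \<delta> i J (\<phi> X))"

end

theory Submission
  imports Defs
begin

text \<open>The differential birational map \<phi> is determined by the images of the finitely many
  order-zero variables u; write each of them as a fraction of order at most l0. A derivation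
  raises the order of a fraction by at most one, and \<phi> commutes with the derivations, so by
  induction on the order every derivative of order l is sent to a fraction of order at most
  l + l0. Sums and products do not raise orders, hence the same bound holds for the image of
  every polynomial of order at most l. Finally, for a quotient a/b of such polynomials,
  \<phi>(b/1) is a unit, so its numerator is a non-zero-divisor and \<phi>(a/b) = \<phi>(a/1) / \<phi>(b/1)
  is again a fraction of order at most l + l0. Characterizability of I and J enters only through
  the fact that they are differential ideals.\<close>

lemma lookup_map_zero: "g 0 = 0 \<Longrightarrow> Poly_Mapping.lookup (Poly_Mapping.map g p) k = g (Poly_Mapping.lookup p k)"
  by transfer (auto simp: when_def)

lemma finite_pvars: "finite (pvars p)"
  unfolding pvars_def by auto

lemma pvars_add: "pvars (p + q) \<subseteq> pvars p \<union> pvars q"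
  unfolding pvars_def using keys_add[of p q] by blast

lemma pvars_uminus [simp]: "pvars (- p) = pvars p"
  unfolding pvars_def by simp

lemma pvars_diff: "pvars (p - q) \<subseteq> pvars p \<union> pvars q"
  unfolding pvars_def using keys_diff[of p q] by blast

lemma pvars_mult: "pvars (p * q) \<subseteq> pvars p \<union> pvars q"
proof
  fix v assume "v \<in> pvars (p * q)"
  then obtain mo where mo: "mo \<in> Poly_Mapping.keys (p * q)" "v \<in> Poly_Mapping.keys mo"
    unfolding pvars_def by auto
  then obtain a b where "mo = a + b" "a \<in> Poly_Mapping.keys p" "b \<in> Poly_Mapping.keys q"
    using keys_mult[of p q] by blast
  with mo keys_add[of a b] show "v \<in> pvars p \<union> pvars q"
    unfolding pvars_def by blast
qed

lemma pvars_single: "pvars (Poly_Mapping.single mo c) \<subseteq> Poly_Mapping.keys mo"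
  unfolding pvars_def by auto

lemma pvars_Var [simp]: "pvars (Var v :: ('f::zero_neq_one, 'u) dpoly) = {v}"
  unfolding pvars_def Var_def by simp

lemma pvars_Const [simp]: "pvars (Const c) = {}"
  unfolding pvars_def Const_def by simp

lemma pvars_zero [simp]: "pvars 0 = {}"
  unfolding pvars_def by simp

lemma pvars_one [simp]: "pvars (1 :: ('f::zero_neq_one, 'u) dpoly) = {}"
  unfolding pvars_def by simp

lemma pvars_sum: "pvars (sum f A) \<subseteq> (\<Union>i\<in>A. pvars (f i))"
  unfolding pvars_def using keys_sum[of f A] by blast

lemma pvars_map: "d 0 = 0 \<Longrightarrow> pvars (Poly_Mapping.map d p) \<subseteq> pvars p"
  unfolding pvars_def by (auto simp: in_keys_iff lookup_map_zero) (metis in_keys_iff)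

lemma keys_add_single:
  "a \<notin> Poly_Mapping.keys f \<Longrightarrow> b \<noteq> 0 \<Longrightarrow>
    Poly_Mapping.keys (f + Poly_Mapping.single a b) = insert a (Poly_Mapping.keys f)"
  by (auto simp: in_keys_iff lookup_add lookup_single when_def split: if_splits)

lemma pvars_add_single:
  "a \<notin> Poly_Mapping.keys f \<Longrightarrow> b \<noteq> 0 \<Longrightarrow>
    pvars (f + Poly_Mapping.single a b) = Poly_Mapping.keys a \<union> pvars f"
  unfolding pvars_def by (simp add: keys_add_single)

lemma keys_minus_subset: "Poly_Mapping.keys (mo - e) \<subseteq> Poly_Mapping.keys (mo :: 'a \<Rightarrow>\<^sub>0 nat)"
  by (auto simp: in_keys_iff lookup_minus)

definition polys_in :: "'u dvar set \<Rightarrow> ('f::zero, 'u) dpoly set" where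
  "polys_in V = {p. pvars p \<subseteq> V}"

lemma dring_eq_polys_in: "dring m = polys_in (dvars m)"
  unfolding dring_def polys_in_def by simp

lemma dring_le_eq_polys_in: "dring_le m l = polys_in {v \<in> dvars m. vord v \<le> l}"
  unfolding dring_le_def polys_in_def by simp

lemma polys_in_add: "p \<in> polys_in V \<Longrightarrow> q \<in> polys_in V \<Longrightarrow> p + q \<in> polys_in V"
  unfolding polys_in_def using pvars_add by blast

lemma polys_in_diff: "p \<in> polys_in V \<Longrightarrow> q \<in> polys_in V \<Longrightarrow> p - q \<in> polys_in V"
  unfolding polys_in_def using pvars_diff by blast

lemma polys_in_mult:
  "p \<in> polys_in V \<Longrightarrow> q \<in> polys_in V \<Longrightarrow> (p :: ('f::comm_ring_1, 'u) dpoly) * q \<in> polys_in V"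
  unfolding polys_in_def using pvars_mult by blast

lemma polys_in_one [simp]: "(1 :: ('f::comm_ring_1, 'u) dpoly) \<in> polys_in V"
  unfolding polys_in_def by simp

lemma polys_in_Const [simp]: "Const c \<in> polys_in V"
  unfolding polys_in_def by simp

lemma polys_in_Var: "v \<in> V \<Longrightarrow> (Var v :: ('f::comm_ring_1, 'u) dpoly) \<in> polys_in V"
  unfolding polys_in_def by simp

lemma polys_in_prod_list:
  "set hs \<subseteq> polys_in V \<Longrightarrow> prod_list (hs :: ('f::comm_ring_1, 'u) dpoly list) \<in> polys_in V"
  by (induction hs) (auto intro: polys_in_mult)

lemma dring_add: "a \<in> dring m \<Longrightarrow> b \<in> dring m \<Longrightarrow> a + b \<in> dring m"
  unfolding dring_eq_polys_in by (rule polys_in_add)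

lemma dring_diff: "a \<in> dring m \<Longrightarrow> b \<in> dring m \<Longrightarrow> a - b \<in> dring m"
  unfolding dring_eq_polys_in by (rule polys_in_diff)

lemma dring_mult: "a \<in> dring m \<Longrightarrow> b \<in> dring m \<Longrightarrow> (a :: ('f::comm_ring_1, 'u) dpoly) * b \<in> dring m"
  unfolding dring_eq_polys_in by (rule polys_in_mult)

lemma dring_one [simp]: "(1 :: ('f::comm_ring_1, 'u) dpoly) \<in> dring m"
  unfolding dring_eq_polys_in by simp

lemma dring_zero [simp]: "0 \<in> dring m"
  unfolding dring_def by simp

lemma dring_prod_list:
  "set hs \<subseteq> dring m \<Longrightarrow> prod_list (hs :: ('f::comm_ring_1, 'u) dpoly list) \<in> dring m"
  unfolding dring_eq_polys_in by (rule polys_in_prod_list)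

lemma dring_Var: "v \<in> dvars m \<Longrightarrow> (Var v :: ('f::comm_ring_1, 'u) dpoly) \<in> dring m"
  unfolding dring_eq_polys_in by (rule polys_in_Var)

lemma dring_le_subset_dring: "dring_le m l \<subseteq> dring m"
  unfolding dring_le_def dring_def by blast

lemma dring_le_mono: "l \<le> k \<Longrightarrow> dring_le m l \<subseteq> dring_le m k"
  unfolding dring_le_def by auto

lemma dring_le_add: "a \<in> dring_le m l \<Longrightarrow> b \<in> dring_le m l \<Longrightarrow> a + b \<in> dring_le m l"
  unfolding dring_le_eq_polys_in by (rule polys_in_add)

lemma dring_le_diff: "a \<in> dring_le m l \<Longrightarrow> b \<in> dring_le m l \<Longrightarrow> a - b \<in> dring_le m l"
  unfolding dring_le_eq_polys_in by (rule polys_in_diff)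

lemma dring_le_mult:
  "a \<in> dring_le m l \<Longrightarrow> b \<in> dring_le m l \<Longrightarrow> (a :: ('f::comm_ring_1, 'u) dpoly) * b \<in> dring_le m l"
  unfolding dring_le_eq_polys_in by (rule polys_in_mult)

lemma dring_le_one [simp]: "(1 :: ('f::comm_ring_1, 'u) dpoly) \<in> dring_le m l"
  unfolding dring_le_eq_polys_in by simp

lemma dring_le_Const [simp]: "Const c \<in> dring_le m l"
  unfolding dring_le_eq_polys_in by simp

lemma Const_one: "Const 1 = 1"
  unfolding Const_def by simp

lemma Const_zero: "Const 0 = 0"
  unfolding Const_def by simp

lemma Var_power:
  "(Var v :: ('f::comm_ring_1, 'u) dpoly) ^ n = Poly_Mapping.single (Poly_Mapping.single v n) 1"
proof (induction n)
  case (Suc n)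
  then show ?case
    unfolding Var_def by (simp add: mult_single single_add[symmetric])
qed simp

lemma update_notin:
  "a \<notin> Poly_Mapping.keys f \<Longrightarrow> Poly_Mapping.update a b f = f + Poly_Mapping.single a b"
  by (rule poly_mapping_eqI) (auto simp: lookup_update lookup_add lookup_single in_keys_iff)

lemma poly_mapping_induct [case_names zero add]:
  assumes "P 0"
    and "\<And>f a b. a \<notin> Poly_Mapping.keys f \<Longrightarrow> b \<noteq> 0 \<Longrightarrow> P f \<Longrightarrow> P (f + Poly_Mapping.single a b)"
  shows "P f"
  by (induction f rule: update_induct) (auto simp: update_notin assms)

lemma polys_in_induct [consumes 1, case_names Const Var add mult]:
  fixes p :: "('f::comm_ring_1, 'u) dpoly"
  assumes "pvars p \<subseteq> V"
    and P_Const: "\<And>c. P (Const c)"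
    and P_Var: "\<And>v. v \<in> V \<Longrightarrow> P (Var v)"
    and P_add: "\<And>p q. P p \<Longrightarrow> P q \<Longrightarrow> P (p + q)"
    and P_mult: "\<And>p q. P p \<Longrightarrow> P q \<Longrightarrow> P (p * q)"
  shows "P p"
proof -
  have power: "P (Var v ^ n)" if "v \<in> V" for v n
    using P_Const[of 1] P_Var[OF that] by (induction n) (auto simp: Const_one intro: P_mult)
  have monomial: "P (Poly_Mapping.single a c)" if "Poly_Mapping.keys a \<subseteq> V" for a c
    using that
  proof (induction a arbitrary: c rule: poly_mapping_induct)
    case zero
    then show ?case using P_Const[of c] by (simp add: Const_def)
  next
    case (add a x n)
    then have "Poly_Mapping.single (a + Poly_Mapping.single x n) c = Poly_Mapping.single a c * Var x ^ n"
      by (simp add: Var_power mult_single)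
    with add show ?case
      by (auto simp: keys_add_single intro: P_mult power)
  qed
  show ?thesis
    using assms(1)
  proof (induction p rule: poly_mapping_induct)
    case zero
    then show ?case using P_Const[of 0] by (simp add: Const_zero)
  next
    case (add p a c)
    then show ?case
      by (auto simp: pvars_add_single intro: P_add monomial)
  qed
qed

lemma sum_list_update_Suc:
  "i < length xs \<Longrightarrow> sum_list (xs[i := xs ! i + 1]) = sum_list xs + (1::nat)"
  by (induction xs arbitrary: i) (auto split: nat.splits)

lemma vshift_dvars: "i < m \<Longrightarrow> v \<in> dvars m \<Longrightarrow> vshift i v \<in> dvars m"
  unfolding dvars_def vshift_def by simp

lemma vord_vshift: "i < m \<Longrightarrow> v \<in> dvars m \<Longrightarrow> vord (vshift i v) = vord v + 1"
  unfolding dvars_def vshift_def vord_def using sum_list_update_Suc[of i "snd v"] by simp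

lemma dvars_induct [consumes 1, case_names zero shift]:
  assumes "v \<in> dvars m"
    and zero: "\<And>u. P (u, replicate m 0)"
    and shift: "\<And>v i. v \<in> dvars m \<Longrightarrow> i < m \<Longrightarrow> P v \<Longrightarrow> P (vshift i v)"
  shows "P v"
proof -
  have "\<forall>v\<in>dvars m. vord v = n \<longrightarrow> P v" for n
  proof (induction n)
    case 0
    show ?case
    proof (intro ballI impI)
      fix v :: "'a dvar" assume "v \<in> dvars m" "vord v = 0"
      have "xs = replicate (length xs) 0" if "sum_list xs = (0::nat)" for xs
        using that by (induction xs) auto
      then have "snd v = replicate m 0"
        using \<open>v \<in> dvars m\<close> \<open>vord v = 0\<close> unfolding vord_def dvars_def by auto
      then show "P v" using zero[of "fst v"] by (metis prod.collapse)
    qed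
  next
    case (Suc n)
    show ?case
    proof (intro ballI impI)
      fix v :: "'a dvar" assume v: "v \<in> dvars m" "vord v = Suc n"
      have len: "length (snd v) = m" using v(1) unfolding dvars_def by simp
      have "sum_list (snd v) \<noteq> 0"
        using v(2) unfolding vord_def by simp
      then have "\<exists>x\<in>set (snd v). x \<noteq> 0"
        by (simp add: sum_list_eq_0_iff)
      then obtain i where i: "i < m" "snd v ! i \<noteq> 0"
        using len by (metis in_set_conv_nth)
      define w where "w = (fst v, (snd v)[i := snd v ! i - 1])"
      have w: "w \<in> dvars m" "vshift i w = v"
        unfolding w_def dvars_def vshift_def using i len by simp_all
      then have "vord w = n" using vord_vshift[OF i(1) w(1)] v(2) by simp
      with Suc w show "P v" using shift[OF w(1) i(1)] by auto
    qed
  qed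
  then show ?thesis using assms(1) by blast
qed

section \<open>The derivations of the differential polynomial ring\<close>

definition is_derivation :: "('f::comm_ring_1 \<Rightarrow> 'f) \<Rightarrow> bool" where
  "is_derivation d \<longleftrightarrow> (\<forall>a b. d (a + b) = d a + d b) \<and> (\<forall>a b. d (a * b) = a * d b + d a * b)"

lemma diff_field_is_derivation: "diff_field m \<delta> \<Longrightarrow> i < m \<Longrightarrow> is_derivation (\<delta> i)"
  unfolding diff_field_def is_derivation_def by (simp add: mult.commute)

lemma derivation_zero: "is_derivation d \<Longrightarrow> d 0 = 0"
  unfolding is_derivation_def by (metis add_cancel_right_right add_0)

lemma derivation_one: "is_derivation d \<Longrightarrow> d 1 = 0"
proof -
  assume "is_derivation d"
  then have "d (1 * 1) = 1 * d 1 + d 1 * 1"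
    unfolding is_derivation_def by blast
  then show ?thesis by simp
qed

lemma leibniz_from_monomials:
  fixes T :: "('a::comm_monoid_add \<Rightarrow>\<^sub>0 'b::comm_ring_1) \<Rightarrow> ('a \<Rightarrow>\<^sub>0 'b)"
  assumes Tadd: "\<And>p q. T (p+q) = T p + T q"
  and mono: "\<And>a b c d. T (Poly_Mapping.single a b * Poly_Mapping.single c d)
      = T (Poly_Mapping.single a b) * Poly_Mapping.single c d + Poly_Mapping.single a b * T (Poly_Mapping.single c d)"
  shows "T (p*q) = T p * q + p * T q"
proof -
  have T0: "T 0 = 0" using Tadd[of 0 0] by simp
  have inner: "T (Poly_Mapping.single a b * q) = T (Poly_Mapping.single a b) * q + Poly_Mapping.single a b * T q" for a b q
  proof (induction q rule: poly_mapping_induct)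
    case zero then show ?case by (simp add: T0)
  next
    case (add f c d)
    have "T (Poly_Mapping.single a b * (f + Poly_Mapping.single c d))
        = T (Poly_Mapping.single a b * f) + T (Poly_Mapping.single a b * Poly_Mapping.single c d)"
      by (simp only: distrib_left Tadd)
    also have "\<dots> = (T (Poly_Mapping.single a b) * f + Poly_Mapping.single a b * T f)
       + (T (Poly_Mapping.single a b) * Poly_Mapping.single c d + Poly_Mapping.single a b * T (Poly_Mapping.single c d))"
      by (simp only: add.IH mono)
    also have "\<dots> = T (Poly_Mapping.single a b) * (f + Poly_Mapping.single c d) + Poly_Mapping.single a b * T (f + Poly_Mapping.single c d)"
      by (simp only: Tadd distrib_left) (simp only: ac_simps)
    finally show ?case .
  qed
  show ?thesis
  proof (induction p rule: poly_mapping_induct)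
    case zero then show ?case by (simp add: T0)
  next
    case (add f a b)
    have "T ((f + Poly_Mapping.single a b) * q) = T (f * q) + T (Poly_Mapping.single a b * q)"
      by (simp only: distrib_right Tadd)
    also have "\<dots> = (T f * q + f * T q) + (T (Poly_Mapping.single a b) * q + Poly_Mapping.single a b * T q)"
      by (simp only: add.IH inner)
    also have "\<dots> = T (f + Poly_Mapping.single a b) * q + (f + Poly_Mapping.single a b) * T q"
      by (simp only: Tadd distrib_right) (simp only: ac_simps)
    finally show ?case .
  qed
qed

lemma sum_keys_ext:
  fixes h :: "'k \<Rightarrow> 'b::comm_monoid_add \<Rightarrow> 'c::comm_monoid_add"
  assumes h0: "\<And>k. h k 0 = 0" and K: "finite K" "Poly_Mapping.keys r \<subseteq> K"
  shows "(\<Sum>k\<in>Poly_Mapping.keys r. h k (Poly_Mapping.lookup r k)) = (\<Sum>k\<in>K. h k (Poly_Mapping.lookup r k))"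
proof (rule sum.mono_neutral_left[OF K(1) K(2)])
  show "\<forall>i\<in>K - Poly_Mapping.keys r. h i (Poly_Mapping.lookup r i) = 0"
    using h0 by (simp add: in_keys_iff)
qed

lemma sum_keys_add:
  fixes h :: "'k \<Rightarrow> 'b::comm_monoid_add \<Rightarrow> 'c::comm_monoid_add"
  assumes h0: "\<And>k. h k 0 = 0" and hadd: "\<And>k x y. h k (x+y) = h k x + h k y"
  shows "(\<Sum>k\<in>Poly_Mapping.keys (p+q). h k (Poly_Mapping.lookup (p+q) k))
       = (\<Sum>k\<in>Poly_Mapping.keys p. h k (Poly_Mapping.lookup p k)) + (\<Sum>k\<in>Poly_Mapping.keys q. h k (Poly_Mapping.lookup q k))"
proof -
  let ?K = "Poly_Mapping.keys p \<union> Poly_Mapping.keys q"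
  have fK: "finite ?K" by simp
  have "(\<Sum>k\<in>Poly_Mapping.keys (p+q). h k (Poly_Mapping.lookup (p+q) k)) = (\<Sum>k\<in>?K. h k (Poly_Mapping.lookup (p+q) k))"
    by (rule sum_keys_ext[where h=h, OF h0 fK keys_add])
  also have "\<dots> = (\<Sum>k\<in>?K. h k (Poly_Mapping.lookup p k)) + (\<Sum>k\<in>?K. h k (Poly_Mapping.lookup q k))"
    unfolding lookup_add hadd by (rule sum.distrib)
  also have "(\<Sum>k\<in>?K. h k (Poly_Mapping.lookup p k)) = (\<Sum>k\<in>Poly_Mapping.keys p. h k (Poly_Mapping.lookup p k))"
    by (rule sum_keys_ext[where h=h, OF h0 fK, symmetric]) blast
  also have "(\<Sum>k\<in>?K. h k (Poly_Mapping.lookup q k)) = (\<Sum>k\<in>Poly_Mapping.keys q. h k (Poly_Mapping.lookup q k))"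
    by (rule sum_keys_ext[where h=h, OF h0 fK, symmetric]) blast
  finally show ?thesis .
qed

lemma pdiff_add: "pdiff v (p + q) = pdiff v p + pdiff v q"
  unfolding pdiff_def
  by (rule sum_keys_add) (simp_all only: distrib_right single_add mult_zero_left single_zero)

lemma pdiff_single: "pdiff v (Poly_Mapping.single a c :: ('f::comm_ring_1,'u) dpoly)
   = Poly_Mapping.single (a - Poly_Mapping.single v 1) (c * of_nat (Poly_Mapping.lookup a v))"
  unfolding pdiff_def by (cases "c = 0") simp_all

lemma pdiff_notin: "v \<notin> pvars p \<Longrightarrow> pdiff v p = 0"
  unfolding pdiff_def pvars_def
  by (rule sum.neutral) (simp add: in_keys_iff)

lemma minus_single_add_commute:
  assumes "0 < Poly_Mapping.lookup a v"
  shows "a - Poly_Mapping.single v 1 + c = a + c - Poly_Mapping.single v (1::nat)"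
proof (rule poly_mapping_eqI)
  fix k show "Poly_Mapping.lookup (a - Poly_Mapping.single v 1 + c) k = Poly_Mapping.lookup (a + c - Poly_Mapping.single v 1) k"
    using assms by (cases "k = v") (simp_all add: lookup_add lookup_minus lookup_single)
qed

lemma pdiff_leibniz: "pdiff v (p * q) = pdiff v p * q + p * pdiff v (q :: ('f::comm_ring_1,'u) dpoly)"
proof (rule leibniz_from_monomials[where T = "pdiff v"])
  show "pdiff v (p + q) = pdiff v p + pdiff v q" for p q :: "('f,'u) dpoly" by (rule pdiff_add)
next
  fix a c :: "'u dvar \<Rightarrow>\<^sub>0 nat" and b d :: 'f
  let ?e = "Poly_Mapping.single v (1::nat)"
  have "pdiff v (Poly_Mapping.single a b * Poly_Mapping.single c d)
     = Poly_Mapping.single (a + c - ?e) (b * d * of_nat (Poly_Mapping.lookup a v + Poly_Mapping.lookup c v))"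
    by (simp add: mult_single pdiff_single lookup_add)
  also have "\<dots> = Poly_Mapping.single (a + c - ?e) (b * of_nat (Poly_Mapping.lookup a v) * d)
                 + Poly_Mapping.single (a + c - ?e) (b * (d * of_nat (Poly_Mapping.lookup c v)))"
    by (simp add: single_add[symmetric] algebra_simps)
  also have "Poly_Mapping.single (a + c - ?e) (b * of_nat (Poly_Mapping.lookup a v) * d)
      = pdiff v (Poly_Mapping.single a b) * Poly_Mapping.single c d"
    using minus_single_add_commute[of a v c] by (cases "Poly_Mapping.lookup a v = 0") (simp_all add: pdiff_single mult_single)
  also have "Poly_Mapping.single (a + c - ?e) (b * (d * of_nat (Poly_Mapping.lookup c v)))
      = Poly_Mapping.single a b * pdiff v (Poly_Mapping.single c d)"
    using minus_single_add_commute[of c v a] by (cases "Poly_Mapping.lookup c v = 0") (simp_all add: pdiff_single mult_single add.commute)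
  finally show "pdiff v (Poly_Mapping.single a b * Poly_Mapping.single c d)
      = pdiff v (Poly_Mapping.single a b) * Poly_Mapping.single c d + Poly_Mapping.single a b * pdiff v (Poly_Mapping.single c d)" .
qed

lemma map_derivation_add: "is_derivation d \<Longrightarrow> Poly_Mapping.map d (p + q) = Poly_Mapping.map d p + Poly_Mapping.map d q"
  by (rule poly_mapping_eqI) (simp add: lookup_map_zero derivation_zero lookup_add is_derivation_def)

lemma map_derivation_leibniz:
  assumes "is_derivation d"
  shows "Poly_Mapping.map d (p * q) = Poly_Mapping.map d p * q + p * Poly_Mapping.map d (q :: ('a::comm_monoid_add \<Rightarrow>\<^sub>0 'f::comm_ring_1))"
proof (rule leibniz_from_monomials)
  show "Poly_Mapping.map d (p + q) = Poly_Mapping.map d p + Poly_Mapping.map d q" for p q :: "'a \<Rightarrow>\<^sub>0 'f"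
    using assms by (rule map_derivation_add)
next
  fix a c :: 'a and b e :: 'f
  have d0: "d 0 = 0" using assms by (rule derivation_zero)
  have dm: "d (b * e) = b * d e + d b * e" using assms unfolding is_derivation_def by blast
  show "Poly_Mapping.map d (Poly_Mapping.single a b * Poly_Mapping.single c e) =
         Poly_Mapping.map d (Poly_Mapping.single a b) * Poly_Mapping.single c e +
         Poly_Mapping.single a b * Poly_Mapping.map d (Poly_Mapping.single c e)"
    by (simp add: mult_single d0 dm single_add algebra_simps)
qed

text \<open>Unlike dder, which sums over the variables of its argument, this sums over a fixed
  finite set V; for V containing the variables of p and q it agrees with dder on p, q, p + q
  and p * q, which makes additivity and the Leibniz rule of dder provable.\<close>
definition poly_derivation :: "('f::comm_ring_1 \<Rightarrow> 'f) \<Rightarrow> ('u dvar \<Rightarrow> ('f,'u) dpoly) \<Rightarrow> 'u dvar set \<Rightarrow> ('f,'u) dpoly \<Rightarrow> ('f,'u) dpoly" where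
  "poly_derivation d W V p = Poly_Mapping.map d p + (\<Sum>v\<in>V. pdiff v p * W v)"

lemma poly_derivation_add: "is_derivation d \<Longrightarrow> poly_derivation d W V (p + q) = poly_derivation d W V p + poly_derivation d W V q"
  unfolding poly_derivation_def by (simp add: map_derivation_add pdiff_add distrib_right sum.distrib algebra_simps)

lemma poly_derivation_leibniz: "is_derivation d \<Longrightarrow> poly_derivation d W V (p * q) = poly_derivation d W V p * q + p * poly_derivation d W V q"
  unfolding poly_derivation_def
  by (simp add: map_derivation_leibniz pdiff_leibniz distrib_right distrib_left sum.distrib sum_distrib_left sum_distrib_right algebra_simps)

lemma dder_eq_poly_derivation:
  assumes "finite V" "pvars p \<subseteq> V"
  shows "dder \<delta> i p = poly_derivation (\<delta> i) (\<lambda>v. Var (vshift i v)) V p"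
proof -
  have "(\<Sum>v\<in>pvars p. pdiff v p * Var (vshift i v)) = (\<Sum>v\<in>V. pdiff v p * Var (vshift i v))"
    by (rule sum.mono_neutral_left[OF assms]) (simp add: pdiff_notin)
  then show ?thesis
    unfolding dder_def poly_derivation_def by simp
qed

lemma dder_add:
  assumes "is_derivation (\<delta> i)"
  shows "dder \<delta> i (p + q) = dder \<delta> i p + dder \<delta> i q"
proof -
  let ?V = "pvars p \<union> pvars q"
  have f: "finite ?V" by (simp add: finite_pvars)
  show ?thesis
    using dder_eq_poly_derivation[OF f, of p \<delta> i] dder_eq_poly_derivation[OF f, of q \<delta> i] dder_eq_poly_derivation[OF f, of "p+q" \<delta> i] pvars_add[of p q]
      poly_derivation_add[OF assms] by auto
qed

lemma dder_mult:
  assumes "is_derivation (\<delta> i)"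
  shows "dder \<delta> i (p * q) = dder \<delta> i p * q + p * dder \<delta> i q"
proof -
  let ?V = "pvars p \<union> pvars q"
  have f: "finite ?V" by (simp add: finite_pvars)
  show ?thesis
    using dder_eq_poly_derivation[OF f, of p \<delta> i] dder_eq_poly_derivation[OF f, of q \<delta> i] dder_eq_poly_derivation[OF f, of "p*q" \<delta> i] pvars_mult[of p q]
      poly_derivation_leibniz[OF assms] by auto
qed

lemma dder_zero: "is_derivation (\<delta> i) \<Longrightarrow> dder \<delta> i 0 = 0"
  using dder_add[of \<delta> i 0 0] by simp

lemma dder_uminus: "is_derivation (\<delta> i) \<Longrightarrow> dder \<delta> i (- p) = - dder \<delta> i p"
proof -
  assume a: "is_derivation (\<delta> i)"
  have "dder \<delta> i p + dder \<delta> i (- p) = 0" using dder_add[of \<delta> i p "-p", OF a] dder_zero[of \<delta> i, OF a] by (metis add.right_inverse)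
  then show ?thesis by (simp add: add_eq_0_iff)
qed

lemma dder_diff: "is_derivation (\<delta> i) \<Longrightarrow> dder \<delta> i (p - q) = dder \<delta> i p - dder \<delta> i q"
  using dder_add[of \<delta> i p "-q"] dder_uminus[of \<delta> i q] by simp

lemma dder_Var:
  assumes "is_derivation (\<delta> i)"
  shows "dder \<delta> i (Var v) = Var (vshift i v)"
proof -
  have "Poly_Mapping.map (\<delta> i) (Var v) = 0"
    unfolding Var_def using derivation_one[OF assms] derivation_zero[OF assms] by simp
  moreover have "pdiff v (Var v :: ('a,'b) dpoly) = 1"
    unfolding Var_def by (simp add: pdiff_single)
  ultimately show ?thesis unfolding dder_def by simp
qed

lemma dder_Const:
  assumes "is_derivation (\<delta> i)"
  shows "dder \<delta> i (Const c) = Const (\<delta> i c)"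
  unfolding dder_def pvars_Const using derivation_zero[OF assms] by (simp add: Const_def)

lemma pvars_pdiff: "pvars (pdiff v p) \<subseteq> pvars p"
proof -
  have "pvars (pdiff v p) \<subseteq> (\<Union>mo\<in>Poly_Mapping.keys p. pvars (Poly_Mapping.single (mo - Poly_Mapping.single v 1)
      (Poly_Mapping.lookup p mo * of_nat (Poly_Mapping.lookup mo v))))"
    unfolding pdiff_def by (rule pvars_sum)
  also have "\<dots> \<subseteq> pvars p"
    using pvars_single keys_minus_subset unfolding pvars_def by fastforce
  finally show ?thesis .
qed

lemma pvars_dder:
  assumes "is_derivation (\<delta> i)"
  shows "pvars (dder \<delta> i p) \<subseteq> pvars p \<union> vshift i ` pvars p"
proof -
  have "pvars (dder \<delta> i p) \<subseteq> pvars (Poly_Mapping.map (\<delta> i) p) \<union> pvars (\<Sum>v\<in>pvars p. pdiff v p * Var (vshift i v))"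
    unfolding dder_def by (rule pvars_add)
  also have "\<dots> \<subseteq> pvars p \<union> (\<Union>v\<in>pvars p. pvars (pdiff v p * Var (vshift i v)))"
    using pvars_map[of "\<delta> i" p, OF derivation_zero[OF assms]] pvars_sum by blast
  also have "\<dots> \<subseteq> pvars p \<union> vshift i ` pvars p"
    using pvars_mult pvars_pdiff by fastforce
  finally show ?thesis .
qed

lemma dder_one: "is_derivation (\<delta> i) \<Longrightarrow> dder \<delta> i 1 = 0"
  using dder_Const[of \<delta> i 1] by (simp add: Const_one derivation_one Const_zero)

lemma dder_dring:
  assumes "is_derivation (\<delta> i)" "i < m" "p \<in> dring m"
  shows "dder \<delta> i p \<in> dring m"
  using pvars_dder[of \<delta> i p, OF assms(1)] assms(3) vshift_dvars[OF assms(2)]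
  unfolding dring_def by blast

lemma dder_dring_le:
  assumes "is_derivation (\<delta> i)" "i < m" "p \<in> dring_le m l"
  shows "dder \<delta> i p \<in> dring_le m (Suc l)"
proof -
  have "vshift i v \<in> dvars m \<and> vord (vshift i v) \<le> Suc l" if "v \<in> pvars p" for v
  proof -
    have v: "v \<in> dvars m" "vord v \<le> l" using that assms(3) unfolding dring_le_def by auto
    then show ?thesis using vshift_dvars[OF assms(2) v(1)] vord_vshift[OF assms(2) v(1)] by simp
  qed
  then show ?thesis
    using pvars_dder[of \<delta> i p, OF assms(1)] assms(3) unfolding dring_le_def by fastforce
qed

lemma ideal_diff: "is_ideal (dring m) I \<Longrightarrow> a \<in> I \<Longrightarrow> b \<in> I \<Longrightarrow> a - b \<in> I"
proof -
  assume I: "is_ideal (dring m) I" and ab: "a \<in> I" "b \<in> I"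
  have "- 1 \<in> dring m" unfolding dring_def by simp
  then have "(- 1) * b \<in> I" using I ab unfolding is_ideal_def by blast
  then have "a + (- 1) * b \<in> I" using I ab unfolding is_ideal_def by blast
  then show ?thesis by simp
qed

lemma ideal_mult: "is_ideal R I \<Longrightarrow> a \<in> I \<Longrightarrow> r \<in> R \<Longrightarrow> r * a \<in> I"
  unfolding is_ideal_def by blast

lemma ideal_mult_right: "is_ideal R I \<Longrightarrow> a \<in> I \<Longrightarrow> r \<in> R \<Longrightarrow> a * r \<in> I"
  unfolding is_ideal_def by (metis mult.commute)

lemma ideal_add: "is_ideal R I \<Longrightarrow> a \<in> I \<Longrightarrow> b \<in> I \<Longrightarrow> a + b \<in> I"
  unfolding is_ideal_def by blast

lemma ideal_subset: "is_ideal R I \<Longrightarrow> a \<in> I \<Longrightarrow> a \<in> R"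
  unfolding is_ideal_def by blast

lemma ideal_zero: "is_ideal R I \<Longrightarrow> 0 \<in> I"
  unfolding is_ideal_def by blast

lemma is_diff_ideal_imp_ideal: "is_diff_ideal m \<delta> I \<Longrightarrow> is_ideal (dring m) I"
  unfolding is_diff_ideal_def by blast

lemma is_ideal_dring: "is_ideal (dring m) (dring m)"
  unfolding is_ideal_def using dring_add dring_mult dring_zero by blast

lemma is_diff_ideal_dring:
  assumes "diff_field m \<delta>"
  shows "is_diff_ideal m \<delta> (dring m)"
  unfolding is_diff_ideal_def using is_ideal_dring dder_dring diff_field_is_derivation[OF assms] by blast

lemma is_diff_ideal_diff_ideal_gen:
  assumes "diff_field m \<delta>" "S \<subseteq> dring m"
  shows "is_diff_ideal m \<delta> (diff_ideal_gen m \<delta> S)"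
proof -
  let ?F = "{I. is_diff_ideal m \<delta> I \<and> S \<subseteq> I}"
  have ne: "dring m \<in> ?F" using is_diff_ideal_dring[OF assms(1)] assms(2) by blast
  show ?thesis
    unfolding is_diff_ideal_def[of m \<delta> "diff_ideal_gen m \<delta> S"] is_ideal_def[of "dring m" "diff_ideal_gen m \<delta> S"]
    unfolding diff_ideal_gen_def
  proof (intro conjI)
    show "\<Inter> ?F \<subseteq> dring m" using ne by blast
    show "0 \<in> \<Inter> ?F" unfolding is_diff_ideal_def is_ideal_def by blast
    show "\<forall>a\<in>\<Inter> ?F. \<forall>b\<in>\<Inter> ?F. a + b \<in> \<Inter> ?F" unfolding is_diff_ideal_def is_ideal_def by blast
    show "\<forall>a\<in>\<Inter> ?F. \<forall>r\<in>dring m. r * a \<in> \<Inter> ?F" unfolding is_diff_ideal_def is_ideal_def by blast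
    show "\<forall>i<m. \<forall>p\<in>\<Inter> ?F. dder \<delta> i p \<in> \<Inter> ?F" unfolding is_diff_ideal_def is_ideal_def by blast
  qed
qed

lemma is_ideal_saturation:
  assumes D: "is_ideal (dring m) D" and H: "H \<subseteq> dring m"
  shows "is_ideal (dring m) (saturation (dring m) D (H :: ('f::comm_ring_1,'u) dpoly set))"
  unfolding is_ideal_def
proof (intro conjI ballI)
  show "saturation (dring m) D H \<subseteq> dring m" unfolding saturation_def by blast
  show "0 \<in> saturation (dring m) D H" unfolding saturation_def using ideal_zero[OF D]
    by (auto intro!: exI[of _ "[]"])
next
  fix a b :: "('f,'u) dpoly" assume "a \<in> saturation (dring m) D H" "b \<in> saturation (dring m) D H"
  then obtain hs ks where hs: "set hs \<subseteq> H" "prod_list hs * a \<in> D" "a \<in> dring m"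
    and ks: "set ks \<subseteq> H" "prod_list ks * b \<in> D" "b \<in> dring m"
    unfolding saturation_def by blast
  have "prod_list (hs @ ks) * (a + b) = prod_list ks * (prod_list hs * a) + prod_list hs * (prod_list ks * b)"
    by (simp add: algebra_simps)
  also have "\<dots> \<in> D"
  proof -
    have ph: "prod_list hs \<in> dring m" and pk: "prod_list ks \<in> dring m" using hs ks H by (auto intro: dring_prod_list)
    show ?thesis using ideal_add[OF D ideal_mult[OF D hs(2) pk] ideal_mult[OF D ks(2) ph]] by simp
  qed
  finally show "a + b \<in> saturation (dring m) D H"
    unfolding saturation_def using hs ks by (auto intro!: exI[of _ "hs @ ks"] dring_add)
next
  fix a r :: "('f,'u) dpoly" assume "a \<in> saturation (dring m) D H" "r \<in> dring m"
  then obtain hs where hs: "set hs \<subseteq> H" "prod_list hs * a \<in> D" "a \<in> dring m"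
    unfolding saturation_def by blast
  have "prod_list hs * (r * a) = r * (prod_list hs * a)" by (simp add: algebra_simps)
  also have "\<dots> \<in> D" using ideal_mult[OF D hs(2) \<open>r \<in> dring m\<close>] .
  finally show "r * a \<in> saturation (dring m) D H"
    unfolding saturation_def using hs \<open>r \<in> dring m\<close> by (auto intro!: exI[of _ hs] dring_mult)
qed

lemma saturation_dder_closed:
  assumes F: "diff_field m \<delta>" and D: "is_diff_ideal m \<delta> D" and H: "H \<subseteq> dring m" and i: "i < m"
    and p: "p \<in> saturation (dring m) D H"
  shows "dder \<delta> i p \<in> saturation (dring m) D H"
proof -
  have Di: "is_ideal (dring m) D" using D by (rule is_diff_ideal_imp_ideal)
  have der: "is_derivation (\<delta> i)" using diff_field_is_derivation[OF F i] .
  obtain hs where hs: "set hs \<subseteq> H" "prod_list hs * p \<in> D" "p \<in> dring m"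
    using p unfolding saturation_def by blast
  define h where "h = prod_list hs"
  have hR: "h \<in> dring m" unfolding h_def using hs H by (intro dring_prod_list) auto
  have dh: "dder \<delta> i h \<in> dring m" using dder_dring[of \<delta> i m h, OF der i hR] .
  have dp: "dder \<delta> i p \<in> dring m" using dder_dring[of \<delta> i m p, OF der i hs(3)] .
  have hp: "h * p \<in> D" using hs unfolding h_def by simp
  have "dder \<delta> i (h * p) \<in> D" using D hp i unfolding is_diff_ideal_def by blast
  then have a: "h * dder \<delta> i (h * p) \<in> D" using ideal_mult[OF Di _ hR] by blast
  have b: "dder \<delta> i h * (h * p) \<in> D" using ideal_mult[OF Di hp dh] .
  have "h * dder \<delta> i (h * p) - dder \<delta> i h * (h * p) = prod_list (hs @ hs) * dder \<delta> i p"
    unfolding dder_mult[of \<delta> i, OF der] h_def by (simp add: algebra_simps)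
  then have "prod_list (hs @ hs) * dder \<delta> i p \<in> D" using ideal_diff[OF Di a b] by simp
  then show ?thesis unfolding saturation_def using hs dp by (auto intro!: exI[of _ "hs @ hs"])
qed

lemma pvars_initial: "pvars (initial r p) \<subseteq> pvars p"
proof -
  have "pvars (initial r p) \<subseteq> (\<Union>mo\<in>{mo\<in>Poly_Mapping.keys p. Poly_Mapping.lookup mo (leader r p) = vdeg (leader r p) p}.
     pvars (Poly_Mapping.single (mo - Poly_Mapping.single (leader r p) (vdeg (leader r p) p)) (Poly_Mapping.lookup p mo)))"
    unfolding initial_def Let_def by (rule pvars_sum)
  also have "\<dots> \<subseteq> pvars p"
    using pvars_single keys_minus_subset unfolding pvars_def by fastforce
  finally show ?thesis .
qed

lemma HS_dring: "S \<subseteq> dring m \<Longrightarrow> HS r S \<subseteq> dring m"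
  unfolding HS_def separant_def dring_def using pvars_initial pvars_pdiff by blast

lemma characterizable_is_diff_ideal:
  assumes F: "diff_field m \<delta>" and C: "characterizable m \<delta> I"
  shows "is_diff_ideal m \<delta> I"
proof -
  obtain r S where S: "diff_regular_chain m \<delta> r S" and I: "I = charI m \<delta> r S"
    using C unfolding characterizable_def by blast
  have S_dring: "S \<subseteq> dring m"
    using S unfolding diff_regular_chain_def weak_d_triangular_def by blast
  have D: "is_diff_ideal m \<delta> (diff_ideal_gen m \<delta> S)"
    by (rule is_diff_ideal_diff_ideal_gen[OF F S_dring])
  have H: "HS r S \<subseteq> dring m"
    by (rule HS_dring[OF S_dring])
  have "is_ideal (dring m) I"
    unfolding I charI_def by (rule is_ideal_saturation[OF is_diff_ideal_imp_ideal[OF D] H])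
  moreover have "\<forall>i<m. \<forall>p\<in>I. dder \<delta> i p \<in> I"
    unfolding I charI_def using saturation_dder_closed[OF F D H] by blast
  ultimately show ?thesis
    unfolding is_diff_ideal_def by blast
qed

section \<open>Total quotient rings\<close>

abbreviation frac_rep :: "nat \<Rightarrow> ('f::comm_ring_1, 'u) dpoly set \<Rightarrow> ('f, 'u) dpoly \<Rightarrow> ('f, 'u) dpoly \<Rightarrow> bool" where
  "frac_rep m I a b \<equiv> a \<in> dring m \<and> nzd_mod (dring m) I b"

lemma nzd_mod_one: "nzd_mod (dring m) I (1::('f::comm_ring_1,'u) dpoly)"
  unfolding nzd_mod_def by simp

lemma nzd_mod_mult:
  assumes "nzd_mod (dring m) I b" "nzd_mod (dring m) I d"
  shows "nzd_mod (dring m) I (b * (d::('f::comm_ring_1,'u) dpoly))"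
  unfolding nzd_mod_def
proof (intro conjI ballI impI)
  show "b * d \<in> dring m" using assms unfolding nzd_mod_def by (auto intro: dring_mult)
next
  fix q assume q: "q \<in> dring m" "b * d * q \<in> I"
  have "d * q \<in> dring m" using assms q unfolding nzd_mod_def by (auto intro: dring_mult)
  moreover have "b * (d * q) \<in> I" using q by (simp add: mult.assoc)
  ultimately have "d * q \<in> I" using assms unfolding nzd_mod_def by blast
  then show "q \<in> I" using assms q unfolding nzd_mod_def by blast
qed

lemma nzd_mod_in_dring: "nzd_mod (dring m) I b \<Longrightarrow> b \<in> dring m"
  unfolding nzd_mod_def by blast

lemma mem_fclass:
  "(c, d) \<in> fclass (dring m) I a b \<longleftrightarrow> a \<in> dring m \<and> c \<in> dring m \<and> nzd_mod (dring m) I b \<and> nzd_mod (dring m) I d \<and> a * d - c * b \<in> I"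
  unfolding fclass_def frac_rel_def by auto

lemma fclass_self:
  assumes I: "is_ideal (dring m) I" and v: "frac_rep m I a b"
  shows "(a, b) \<in> fclass (dring m) I a b"
  using v ideal_zero[OF I] by (simp add: mem_fclass)

lemma fclass_eqI:
  fixes a b c d :: "('f::comm_ring_1,'u) dpoly"
  assumes I: "is_ideal (dring m) I" and v1: "frac_rep m I a b" and v2: "frac_rep m I c d"
    and r: "a * d - c * b \<in> I"
  shows "fclass (dring m) I a b = fclass (dring m) I c d"
proof (rule set_eqI)
  fix x :: "('f,'u) dpoly \<times> ('f,'u) dpoly" obtain e f where x: "x = (e, f)" by (cases x)
  have bR: "b \<in> dring m" and dR: "d \<in> dring m" using v1 v2 nzd_mod_in_dring by blast+
  show "x \<in> fclass (dring m) I a b \<longleftrightarrow> x \<in> fclass (dring m) I c d"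
    unfolding x mem_fclass
  proof (intro iffI; elim conjE; intro conjI)
    assume e: "e \<in> dring m" and f: "nzd_mod (dring m) I f" and h: "a * f - e * b \<in> I"
    have fR: "f \<in> dring m" using f nzd_mod_in_dring by blast
    show "e \<in> dring m" "nzd_mod (dring m) I f" "c \<in> dring m" "nzd_mod (dring m) I d" using e f v2 by auto
    have "b * (c * f - e * d) = d * (a * f - e * b) - f * (a * d - c * b)" by (simp add: algebra_simps)
    also have "\<dots> \<in> I" by (rule ideal_diff[OF I ideal_mult[OF I h dR] ideal_mult[OF I r fR]])
    finally have "b * (c * f - e * d) \<in> I" .
    moreover have "c * f - e * d \<in> dring m" using v2 e fR dR by (intro dring_diff dring_mult) auto
    ultimately show "c * f - e * d \<in> I" using v1 unfolding nzd_mod_def by blast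
  next
    assume e: "e \<in> dring m" and f: "nzd_mod (dring m) I f" and h: "c * f - e * d \<in> I"
    have fR: "f \<in> dring m" using f nzd_mod_in_dring by blast
    show "e \<in> dring m" "nzd_mod (dring m) I f" "a \<in> dring m" "nzd_mod (dring m) I b" using e f v1 by auto
    have "d * (a * f - e * b) = f * (a * d - c * b) + b * (c * f - e * d)" by (simp add: algebra_simps)
    also have "\<dots> \<in> I" by (rule ideal_add[OF I ideal_mult[OF I r fR] ideal_mult[OF I h bR]])
    finally have "d * (a * f - e * b) \<in> I" .
    moreover have "a * f - e * b \<in> dring m" using v1 e fR bR by (intro dring_diff dring_mult) auto
    ultimately show "a * f - e * b \<in> I" using v2 unfolding nzd_mod_def by blast
  qed
qed

lemma fclass_eqD:
  assumes I: "is_ideal (dring m) I" and cd: "frac_rep m I c d"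
    and eq: "fclass (dring m) I a b = fclass (dring m) I c d"
  shows "a * d - c * b \<in> I"
  using fclass_self[OF I cd] unfolding eq[symmetric] by (simp add: mem_fclass)

lemma Union_eq_const: "X \<in> S \<Longrightarrow> (\<And>Y. Y \<in> S \<Longrightarrow> Y = X) \<Longrightarrow> \<Union>S = X"
  by blast

lemma qmul_fclass:
  fixes a b c d :: "('f::comm_ring_1,'u) dpoly"
  assumes I: "is_ideal (dring m) I" and v1: "frac_rep m I a b" and v2: "frac_rep m I c d"
  shows "qmul (dring m) I (fclass (dring m) I a b) (fclass (dring m) I c d) = fclass (dring m) I (a * c) (b * d)"
  unfolding qmul_def
proof (rule Union_eq_const)
  have vv: "frac_rep m I (a * c) (b * d)" using v1 v2 by (auto intro: dring_mult nzd_mod_mult)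
  show "fclass (dring m) I (a * c) (b * d) \<in> {fclass (dring m) I (a' * c') (b' * d') |a' b' c' d'.
          (a', b') \<in> fclass (dring m) I a b \<and> (c', d') \<in> fclass (dring m) I c d}"
    using fclass_self[OF I v1] fclass_self[OF I v2] by blast
  fix Y assume "Y \<in> {fclass (dring m) I (a' * c') (b' * d') |a' b' c' d'.
          (a', b') \<in> fclass (dring m) I a b \<and> (c', d') \<in> fclass (dring m) I c d}"
  then obtain a' b' c' d' where Y: "Y = fclass (dring m) I (a' * c') (b' * d')"
    and m1: "(a', b') \<in> fclass (dring m) I a b" and m2: "(c', d') \<in> fclass (dring m) I c d" by blast
  have h1: "frac_rep m I a' b'" "a * b' - a' * b \<in> I" using m1 by (simp_all add: mem_fclass)
  have h2: "frac_rep m I c' d'" "c * d' - c' * d \<in> I" using m2 by (simp_all add: mem_fclass)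
  have v': "frac_rep m I (a' * c') (b' * d')" using h1 h2 by (auto intro: dring_mult nzd_mod_mult)
  define x where "x = a * b' - a' * b"
  define y where "y = c * d' - c' * d"
  have yR: "y \<in> dring m" using ideal_subset[OF I h2(2)] unfolding y_def .
  have cd'R: "c * d' \<in> dring m" using v2 h2 nzd_mod_in_dring by (auto intro!: dring_mult)
  have R: "y - c * d' \<in> dring m" "a * b' \<in> dring m"
    using dring_diff[OF yR cd'R] v1 h1 nzd_mod_in_dring by (auto intro!: dring_mult)
  have "a' * c' * (b * d) - a * c * (b' * d') = x * (y - c * d') - y * (a * b')"
    unfolding x_def y_def by (simp add: algebra_simps)
  also have "\<dots> \<in> I"
    using h1 h2 unfolding x_def[symmetric] y_def[symmetric]
    by (intro ideal_diff[OF I] ideal_mult_right[OF I _ R(1)] ideal_mult_right[OF I _ R(2)])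
  finally show "Y = fclass (dring m) I (a * c) (b * d)" unfolding Y by (rule fclass_eqI[OF I v' vv])
qed

lemma qadd_fclass:
  fixes a b c d :: "('f::comm_ring_1,'u) dpoly"
  assumes I: "is_ideal (dring m) I" and v1: "frac_rep m I a b" and v2: "frac_rep m I c d"
  shows "qadd (dring m) I (fclass (dring m) I a b) (fclass (dring m) I c d) = fclass (dring m) I (a * d + c * b) (b * d)"
  unfolding qadd_def
proof (rule Union_eq_const)
  have bR: "b \<in> dring m" and dR: "d \<in> dring m" using v1 v2 nzd_mod_in_dring by blast+
  have vv: "frac_rep m I (a * d + c * b) (b * d)" using v1 v2 bR dR by (auto intro: dring_mult nzd_mod_mult dring_add)
  show "fclass (dring m) I (a * d + c * b) (b * d) \<in> {fclass (dring m) I (a' * d' + c' * b') (b' * d') |a' b' c' d'.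
          (a', b') \<in> fclass (dring m) I a b \<and> (c', d') \<in> fclass (dring m) I c d}"
    using fclass_self[OF I v1] fclass_self[OF I v2] by blast
  fix Y assume "Y \<in> {fclass (dring m) I (a' * d' + c' * b') (b' * d') |a' b' c' d'.
          (a', b') \<in> fclass (dring m) I a b \<and> (c', d') \<in> fclass (dring m) I c d}"
  then obtain a' b' c' d' where Y: "Y = fclass (dring m) I (a' * d' + c' * b') (b' * d')"
    and m1: "(a', b') \<in> fclass (dring m) I a b" and m2: "(c', d') \<in> fclass (dring m) I c d" by blast
  have h1: "frac_rep m I a' b'" "a * b' - a' * b \<in> I" using m1 by (simp_all add: mem_fclass)
  have h2: "frac_rep m I c' d'" "c * d' - c' * d \<in> I" using m2 by (simp_all add: mem_fclass)
  have b'R: "b' \<in> dring m" and d'R: "d' \<in> dring m" using h1 h2 nzd_mod_in_dring by blast+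
  have v': "frac_rep m I (a' * d' + c' * b') (b' * d')" using h1 h2 b'R d'R by (auto intro: dring_mult nzd_mod_mult dring_add)
  define x where "x = a * b' - a' * b"
  define y where "y = c * d' - c' * d"
  have R: "d * d' \<in> dring m" "b * b' \<in> dring m" using bR dR b'R d'R by (auto intro: dring_mult)
  have "(a' * d' + c' * b') * (b * d) - (a * d + c * b) * (b' * d') = 0 - (d * d') * x - (b * b') * y"
    unfolding x_def y_def by (simp add: algebra_simps)
  also have "\<dots> \<in> I"
    using h1 h2 unfolding x_def[symmetric] y_def[symmetric]
    by (intro ideal_diff[OF I] ideal_zero[OF I] ideal_mult[OF I _ R(1)] ideal_mult[OF I _ R(2)])
  finally show "Y = fclass (dring m) I (a * d + c * b) (b * d)" unfolding Y by (rule fclass_eqI[OF I v' vv])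
qed

lemma qmul_fclass_one:
  "is_ideal (dring m) I \<Longrightarrow> p \<in> dring m \<Longrightarrow> q \<in> dring m \<Longrightarrow>
    qmul (dring m) I (fclass (dring m) I p 1) (fclass (dring m) I q 1) = fclass (dring m) I (p * q) 1"
  using qmul_fclass[of m I p 1 q 1] nzd_mod_one[of m I] by simp

lemma qadd_fclass_one:
  "is_ideal (dring m) I \<Longrightarrow> p \<in> dring m \<Longrightarrow> q \<in> dring m \<Longrightarrow>
    qadd (dring m) I (fclass (dring m) I p 1) (fclass (dring m) I q 1) = fclass (dring m) I (p + q) 1"
  using qadd_fclass[of m I p 1 q 1] nzd_mod_one[of m I] by simp

lemma fclass_in_dquot: "frac_rep m I a b \<Longrightarrow> fclass (dring m) I a b \<in> dquot m I"
  unfolding dquot_def tquot_def by blast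

lemma dquotE:
  assumes "Y \<in> dquot m I"
  obtains a b where "frac_rep m I a b" "Y = fclass (dring m) I a b"
  using assms unfolding dquot_def tquot_def by blast

lemma qder_fclass:
  fixes I :: "('f::comm_ring_1, 'u) dpoly set"
  assumes der: "is_derivation (\<delta> i)" and i: "i < m" and I: "is_diff_ideal m \<delta> I"
    and ab: "frac_rep m I a b"
  shows "qder m \<delta> i I (fclass (dring m) I a b)
    = fclass (dring m) I (dder \<delta> i a * b - a * dder \<delta> i b) (b * b)"
  unfolding qder_def
proof (rule Union_eq_const)
  have I_ideal: "is_ideal (dring m) I" and I_dder: "\<And>p. p \<in> I \<Longrightarrow> dder \<delta> i p \<in> I"
    using I i unfolding is_diff_ideal_def by blast+
  have N_rep: "frac_rep m I (dder \<delta> i x * y - x * dder \<delta> i y) (y * y)" if "frac_rep m I x y" for x y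
    using that nzd_mod_in_dring[of m I y] dder_dring[of \<delta> i m, OF der i]
    by (auto intro!: dring_diff dring_mult nzd_mod_mult)
  have N_eq: "fclass (dring m) I (dder \<delta> i a' * b' - a' * dder \<delta> i b') (b' * b')
      = fclass (dring m) I (dder \<delta> i a * b - a * dder \<delta> i b) (b * b)"
    if a'b': "(a', b') \<in> fclass (dring m) I a b" for a' b'
  proof (rule fclass_eqI[OF I_ideal N_rep N_rep[OF ab]])
    have rep: "frac_rep m I a' b'" and e: "a * b' - a' * b \<in> I"
      using a'b' by (simp_all add: mem_fclass)
    from rep show "frac_rep m I a' b'" .
    have R: "b \<in> dring m" "b' \<in> dring m" "dder \<delta> i b \<in> dring m" "dder \<delta> i b' \<in> dring m"
      using ab rep nzd_mod_in_dring dder_dring[of \<delta> i m, OF der i] by blast+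
    \<comment> \<open>d(a'/b' - a/b) = - d(e/(b b')) with e = a b' - a' b, cleared of denominators\<close>
    have "(dder \<delta> i a' * b' - a' * dder \<delta> i b') * (b * b) - (dder \<delta> i a * b - a * dder \<delta> i b) * (b' * b')
        = (a * b' - a' * b) * (dder \<delta> i b * b' + b * dder \<delta> i b') - dder \<delta> i (a * b' - a' * b) * (b * b')"
      by (simp add: dder_diff[of \<delta> i, OF der] dder_mult[of \<delta> i, OF der] algebra_simps)
    also have "\<dots> \<in> I"
      using R by (intro ideal_diff[OF I_ideal] ideal_mult_right[OF I_ideal] e I_dder dring_add dring_mult)
    finally show "(dder \<delta> i a' * b' - a' * dder \<delta> i b') * (b * b) - (dder \<delta> i a * b - a * dder \<delta> i b) * (b' * b') \<in> I" .
  qed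
  show "fclass (dring m) I (dder \<delta> i a * b - a * dder \<delta> i b) (b * b)
      \<in> {fclass (dring m) I (dder \<delta> i a' * b' - a' * dder \<delta> i b') (b' * b') | a' b'. (a', b') \<in> fclass (dring m) I a b}"
    using fclass_self[OF I_ideal ab] by blast
  show "Y = fclass (dring m) I (dder \<delta> i a * b - a * dder \<delta> i b) (b * b)"
    if "Y \<in> {fclass (dring m) I (dder \<delta> i a' * b' - a' * dder \<delta> i b') (b' * b') | a' b'. (a', b') \<in> fclass (dring m) I a b}" for Y
    using that N_eq by blast
qed

section \<open>Fractions of bounded order\<close>

lemma nzd_mod_dring_le:
  "b \<in> dring_le m k \<Longrightarrow> nzd_mod (dring m) J b \<Longrightarrow> nzd_mod (dring_le m k) (J \<inter> dring_le m k) b"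
  unfolding nzd_mod_def using dring_le_subset_dring by blast

lemma mem_dquot_le_iff:
  "Y \<in> dquot_le m J k \<longleftrightarrow>
    (\<exists>a b. a \<in> dring_le m k \<and> b \<in> dring_le m k \<and> nzd_mod (dring m) J b \<and> Y = fclass (dring m) J a b)"
proof
  assume "Y \<in> dquot_le m J k"
  then show "\<exists>a b. a \<in> dring_le m k \<and> b \<in> dring_le m k \<and> nzd_mod (dring m) J b \<and> Y = fclass (dring m) J a b"
    unfolding dquot_le_def nzd_mod_def[of "dring_le m k"] by blast
next
  assume "\<exists>a b. a \<in> dring_le m k \<and> b \<in> dring_le m k \<and> nzd_mod (dring m) J b \<and> Y = fclass (dring m) J a b"
  then show "Y \<in> dquot_le m J k"
    unfolding dquot_le_def using nzd_mod_dring_le by blast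
qed

lemma dquot_leI:
  "a \<in> dring_le m k \<Longrightarrow> b \<in> dring_le m k \<Longrightarrow> nzd_mod (dring m) J b \<Longrightarrow>
    fclass (dring m) J a b \<in> dquot_le m J k"
  unfolding mem_dquot_le_iff by blast

lemma dquot_leE:
  assumes "Y \<in> dquot_le m J k"
  obtains a b where "a \<in> dring_le m k" "b \<in> dring_le m k" "frac_rep m J a b"
    "Y = fclass (dring m) J a b"
  using assms dring_le_subset_dring unfolding mem_dquot_le_iff by blast

lemma dquot_le_mono:
  assumes "k \<le> k'"
  shows "dquot_le m J k \<subseteq> dquot_le m J k'"
proof
  fix Y assume "Y \<in> dquot_le m J k"
  then obtain a b where "a \<in> dring_le m k" "b \<in> dring_le m k" "frac_rep m J a b" "Y = fclass (dring m) J a b"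
    by (elim dquot_leE)
  then show "Y \<in> dquot_le m J k'"
    using dring_le_mono[OF assms, of m] by (auto intro: dquot_leI)
qed

lemma dquot_le_qmul:
  assumes J: "is_ideal (dring m) J" and "Y \<in> dquot_le m J k" "Y' \<in> dquot_le m J k"
  shows "qmul (dring m) J Y Y' \<in> dquot_le m J k"
proof -
  obtain a b a' b' where "a \<in> dring_le m k" "b \<in> dring_le m k" "frac_rep m J a b" "Y = fclass (dring m) J a b"
    "a' \<in> dring_le m k" "b' \<in> dring_le m k" "frac_rep m J a' b'" "Y' = fclass (dring m) J a' b'"
    using assms(2,3) by (elim dquot_leE)
  then show ?thesis
    by (simp add: qmul_fclass[OF J] dquot_leI dring_le_mult nzd_mod_mult)
qed

lemma dquot_le_qadd:
  assumes J: "is_ideal (dring m) J" and "Y \<in> dquot_le m J k" "Y' \<in> dquot_le m J k"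
  shows "qadd (dring m) J Y Y' \<in> dquot_le m J k"
proof -
  obtain a b a' b' where "a \<in> dring_le m k" "b \<in> dring_le m k" "frac_rep m J a b" "Y = fclass (dring m) J a b"
    "a' \<in> dring_le m k" "b' \<in> dring_le m k" "frac_rep m J a' b'" "Y' = fclass (dring m) J a' b'"
    using assms(2,3) by (elim dquot_leE)
  then show ?thesis
    by (simp add: qadd_fclass[OF J] dquot_leI dring_le_add dring_le_mult nzd_mod_mult)
qed

lemma dquot_le_qder:
  assumes der: "is_derivation (\<delta> i)" and i: "i < m" and J: "is_diff_ideal m \<delta> J"
    and Y: "Y \<in> dquot_le m J k"
  shows "qder m \<delta> i J Y \<in> dquot_le m J (Suc k)"
proof -
  obtain a b where ab: "a \<in> dring_le m k" "b \<in> dring_le m k" "frac_rep m J a b" "Y = fclass (dring m) J a b"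
    using Y by (elim dquot_leE)
  have "a \<in> dring_le m (Suc k)" "b \<in> dring_le m (Suc k)"
    using ab(1,2) dring_le_mono[of k "Suc k" m] by auto
  moreover have "dder \<delta> i a \<in> dring_le m (Suc k)" "dder \<delta> i b \<in> dring_le m (Suc k)"
    using dder_dring_le[of \<delta> i m, OF der i] ab(1,2) by blast+
  ultimately show ?thesis
    using ab(3) unfolding ab(4) qder_fclass[OF der i J ab(3)]
    by (intro dquot_leI dring_le_diff dring_le_mult nzd_mod_mult) auto
qed

lemma dquot_ex_dquot_le:
  assumes "Y \<in> dquot m J"
  shows "\<exists>k. Y \<in> dquot_le m J k"
proof -
  obtain a b where ab: "frac_rep m J a b" "Y = fclass (dring m) J a b"
    using assms by (elim dquotE)
  define k where "k = Max (insert 0 (vord ` (pvars a \<union> pvars b)))"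
  have "vord v \<le> k" if "v \<in> pvars a \<union> pvars b" for v
    unfolding k_def using that by (intro Max_ge) (auto simp: finite_pvars)
  then have "a \<in> dring_le m k" "b \<in> dring_le m k"
    using ab(1) nzd_mod_in_dring[of m J b] unfolding dring_le_def dring_def by blast+
  then show ?thesis
    using ab by (blast intro: dquot_leI)
qed

lemma nzd_mod_numerator_of_unit:
  assumes J: "is_ideal (dring m) J" and PQ: "frac_rep m J P Q" and ef: "frac_rep m J e f"
    and unit: "fclass (dring m) J (P * e) (Q * f) = fclass (dring m) J 1 1"
  shows "nzd_mod (dring m) J P"
  unfolding nzd_mod_def
proof (intro conjI ballI impI)
  show "P \<in> dring m" using PQ by blast
  fix q assume q: "q \<in> dring m" "P * q \<in> J"
  have e: "e \<in> dring m" and f: "f \<in> dring m"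
    using ef nzd_mod_in_dring by blast+
  have rel: "P * e * 1 - 1 * (Q * f) \<in> J"
    using fclass_eqD[OF J _ unit] nzd_mod_one[of m J] by simp
  have "Q * (f * q) = e * (P * q) - (P * e * 1 - 1 * (Q * f)) * q"
    by (simp add: algebra_simps)
  also have "\<dots> \<in> J"
    by (rule ideal_diff[OF J ideal_mult[OF J q(2) e] ideal_mult_right[OF J rel q(1)]])
  finally have "f * q \<in> J"
    using PQ dring_mult[OF f q(1)] unfolding nzd_mod_def by blast
  then show "q \<in> J"
    using ef q(1) unfolding nzd_mod_def by blast
qed

text \<open>Dividing by a unit Z of bounded order does not raise the order, because the numerator of
  Z is a non-zero-divisor and hence can serve as a denominator.\<close>
lemma dquot_le_divide:
  assumes J: "is_ideal (dring m) J" and Y: "Y \<in> dquot m J"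
    and Z: "Z \<in> dquot_le m J k" and YZ: "qmul (dring m) J Y Z \<in> dquot_le m J k"
    and Z': "Z' \<in> dquot m J" and unit: "qmul (dring m) J Z Z' = fclass (dring m) J 1 1"
  shows "Y \<in> dquot_le m J k"
proof -
  obtain c d where cd: "frac_rep m J c d" "Y = fclass (dring m) J c d"
    using Y by (elim dquotE)
  obtain P Q where PQ: "P \<in> dring_le m k" "Q \<in> dring_le m k" "frac_rep m J P Q" "Z = fclass (dring m) J P Q"
    using Z by (elim dquot_leE)
  obtain e f where ef: "frac_rep m J e f" "Z' = fclass (dring m) J e f"
    using Z' by (elim dquotE)
  obtain A B where AB: "A \<in> dring_le m k" "B \<in> dring_le m k" "frac_rep m J A B"
    "qmul (dring m) J Y Z = fclass (dring m) J A B"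
    using YZ by (elim dquot_leE)
  have nzd_P: "nzd_mod (dring m) J P"
    using nzd_mod_numerator_of_unit[OF J PQ(3) ef(1)] unit
    unfolding PQ(4) ef(2) qmul_fclass[OF J PQ(3) ef(1)] .
  have Q: "Q \<in> dring m"
    using PQ(3) nzd_mod_in_dring by blast
  have "fclass (dring m) J A B = fclass (dring m) J (c * P) (d * Q)"
    using AB(4) unfolding cd(2) PQ(4) qmul_fclass[OF J cd(1) PQ(3)] by simp
  then have rel: "A * (d * Q) - c * P * B \<in> J"
    using cd(1) PQ(3) by (intro fclass_eqD[OF J]) (auto intro: dring_mult nzd_mod_mult)
  have "c * (B * P) - A * Q * d = 0 - (A * (d * Q) - c * P * B)"
    by (simp add: algebra_simps)
  also have "\<dots> \<in> J"
    by (rule ideal_diff[OF J ideal_zero[OF J] rel])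
  finally have "Y = fclass (dring m) J (A * Q) (B * P)"
    unfolding cd(2) using cd(1) AB(3) Q nzd_P by (intro fclass_eqI[OF J]) (auto intro: dring_mult nzd_mod_mult)
  then show ?thesis
    using AB(1,2,3) PQ(1,2) nzd_P by (auto intro!: dquot_leI dring_le_mult nzd_mod_mult)
qed

section \<open>Differential birational maps preserve bounded orders\<close>

context
  fixes m :: nat and \<delta> :: "nat \<Rightarrow> 'f::field \<Rightarrow> 'f"
    and I :: "('f, 'u) dpoly set" and J :: "('f, 'v) dpoly set"
    and \<phi> :: "(('f, 'u) dpoly \<times> ('f, 'u) dpoly) set \<Rightarrow> (('f, 'v) dpoly \<times> ('f, 'v) dpoly) set"
  assumes F: "diff_field m \<delta>" and I: "is_diff_ideal m \<delta> I" and J: "is_diff_ideal m \<delta> J"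
    and birational: "diff_birational m \<delta> I J \<phi>"
begin

lemma birational_in_dquot: "X \<in> dquot m I \<Longrightarrow> \<phi> X \<in> dquot m J"
  using birational unfolding diff_birational_def bij_betw_def by blast

lemma birational_qmul:
  "X \<in> dquot m I \<Longrightarrow> Y \<in> dquot m I \<Longrightarrow> \<phi> (qmul (dring m) I X Y) = qmul (dring m) J (\<phi> X) (\<phi> Y)"
  using birational unfolding diff_birational_def by blast

lemma birational_qadd:
  "X \<in> dquot m I \<Longrightarrow> Y \<in> dquot m I \<Longrightarrow> \<phi> (qadd (dring m) I X Y) = qadd (dring m) J (\<phi> X) (\<phi> Y)"
  using birational unfolding diff_birational_def by blast

lemma birational_Const: "\<phi> (fclass (dring m) I (Const c) 1) = fclass (dring m) J (Const c) 1"
  using birational unfolding diff_birational_def by blast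

lemma birational_one: "\<phi> (fclass (dring m) I 1 1) = fclass (dring m) J 1 1"
  using birational_Const[of 1] by (simp add: Const_one)

lemma birational_qder: "i < m \<Longrightarrow> X \<in> dquot m I \<Longrightarrow> \<phi> (qder m \<delta> i I X) = qder m \<delta> i J (\<phi> X)"
  using birational unfolding diff_birational_def by blast

lemma birational_Var_order:
  assumes fin: "finite (UNIV :: 'u set)"
  shows "\<exists>l0. \<forall>v\<in>dvars m. \<phi> (fclass (dring m) I (Var v) 1) \<in> dquot_le m J (vord v + l0)"
proof -
  have Var_rep: "frac_rep m I (Var v) 1" if "v \<in> dvars m" for v
    using dring_Var[OF that] nzd_mod_one by blast
  have "\<exists>k. \<phi> (fclass (dring m) I (Var (u, replicate m 0)) 1) \<in> dquot_le m J k" for u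
    using Var_rep[of "(u, replicate m 0)"]
    by (intro dquot_ex_dquot_le birational_in_dquot fclass_in_dquot) (simp add: dvars_def)
  then obtain k where k: "\<And>u. \<phi> (fclass (dring m) I (Var (u, replicate m 0)) 1) \<in> dquot_le m J (k u)"
    by metis
  define l0 where "l0 = Max (range k)"
  have base: "\<phi> (fclass (dring m) I (Var (u, replicate m 0)) 1) \<in> dquot_le m J l0" for u
    using k[of u] dquot_le_mono[of "k u" l0 m J] fin unfolding l0_def by auto
  have "\<phi> (fclass (dring m) I (Var v) 1) \<in> dquot_le m J (vord v + l0)" if "v \<in> dvars m" for v
    using that
  proof (induction v rule: dvars_induct)
    case (zero u)
    then show ?case using base[of u] by (simp add: vord_def sum_list_replicate)
  next
    case (shift v i)
    have v: "v \<in> dvars m" and i: "i < m" by fact+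
    have IH: "\<phi> (fclass (dring m) I (Var v) 1) \<in> dquot_le m J (vord v + l0)" by fact
    have der: "is_derivation (\<delta> i)"
      by (rule diff_field_is_derivation[OF F i])
    have "fclass (dring m) I (Var (vshift i v)) 1 = qder m \<delta> i I (fclass (dring m) I (Var v) 1)"
      using qder_fclass[OF der i I Var_rep[OF v]] by (simp add: dder_Var[of \<delta> i, OF der] dder_one[of \<delta> i, OF der])
    then have "\<phi> (fclass (dring m) I (Var (vshift i v)) 1) = qder m \<delta> i J (\<phi> (fclass (dring m) I (Var v) 1))"
      using birational_qder[OF i fclass_in_dquot[OF Var_rep[OF v]]] by simp
    also have "\<dots> \<in> dquot_le m J (Suc (vord v + l0))"
      by (rule dquot_le_qder[OF der i J IH])
    finally show ?case
      using vord_vshift[OF i v] by simp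
  qed
  then show ?thesis by blast
qed

lemma birational_poly_order:
  assumes l0: "\<forall>v\<in>dvars m. \<phi> (fclass (dring m) I (Var v) 1) \<in> dquot_le m J (vord v + l0)"
    and p: "p \<in> dring_le m l"
  shows "\<phi> (fclass (dring m) I p 1) \<in> dquot_le m J (l + l0)"
proof -
  have I': "is_ideal (dring m) I" and J': "is_ideal (dring m) J"
    using I J by (simp_all add: is_diff_ideal_imp_ideal)
  have "pvars p \<subseteq> {v \<in> dvars m. vord v \<le> l}"
    using p unfolding dring_le_def by simp
  then have "p \<in> dring_le m l \<and> \<phi> (fclass (dring m) I p 1) \<in> dquot_le m J (l + l0)"
  proof (induction p rule: polys_in_induct)
    case (Const c)
    show ?case
      unfolding birational_Const by (simp add: dquot_leI nzd_mod_one)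
  next
    case (Var v)
    then have "(Var v :: ('f, 'u) dpoly) \<in> dring_le m l"
      unfolding dring_le_eq_polys_in by (rule polys_in_Var)
    moreover have "\<phi> (fclass (dring m) I (Var v) 1) \<in> dquot_le m J (l + l0)"
      using l0 Var dquot_le_mono[of "vord v + l0" "l + l0" m J] by auto
    ultimately show ?case ..
  next
    case (add p q)
    then have "p \<in> dring m" "q \<in> dring m"
      using dring_le_subset_dring by blast+
    with add show ?case
      using birational_qadd[OF fclass_in_dquot fclass_in_dquot, of p 1 q 1]
      by (simp add: nzd_mod_one qadd_fclass_one[OF I'] dring_le_add dquot_le_qadd[OF J'])
  next
    case (mult p q)
    then have "p \<in> dring m" "q \<in> dring m"
      using dring_le_subset_dring by blast+
    with mult show ?case
      using birational_qmul[OF fclass_in_dquot fclass_in_dquot, of p 1 q 1]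
      by (simp add: nzd_mod_one qmul_fclass_one[OF I'] dring_le_mult dquot_le_qmul[OF J'])
  qed
  then show ?thesis ..
qed

lemma birational_dquot_le:
  assumes l0: "\<forall>v\<in>dvars m. \<phi> (fclass (dring m) I (Var v) 1) \<in> dquot_le m J (vord v + l0)"
    and X: "X \<in> dquot_le m I l"
  shows "\<phi> X \<in> dquot_le m J (l + l0)"
proof -
  have I': "is_ideal (dring m) I" and J': "is_ideal (dring m) J"
    using I J by (simp_all add: is_diff_ideal_imp_ideal)
  obtain a b where ab: "a \<in> dring_le m l" "b \<in> dring_le m l" "frac_rep m I a b" "X = fclass (dring m) I a b"
    using X by (elim dquot_leE)
  have a: "a \<in> dring m" and b: "b \<in> dring m"
    using ab(1,2) dring_le_subset_dring by blast+
  have reps: "frac_rep m I a 1" "frac_rep m I b 1" "frac_rep m I 1 b" "frac_rep m I 1 1"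
    using a b ab(3) nzd_mod_one by auto
  have X_in: "X \<in> dquot m I"
    unfolding ab(4) by (rule fclass_in_dquot[OF ab(3)])
  have b_in: "fclass (dring m) I b 1 \<in> dquot m I" and b_inv_in: "fclass (dring m) I 1 b \<in> dquot m I"
    using reps by (simp_all add: fclass_in_dquot)
  have "qmul (dring m) I X (fclass (dring m) I b 1) = fclass (dring m) I a 1"
    unfolding ab(4) qmul_fclass[OF I' ab(3) reps(2)]
    using a b ab(3) reps(1) by (intro fclass_eqI[OF I']) (auto intro: dring_mult nzd_mod_mult ideal_zero[OF I'])
  then have "qmul (dring m) J (\<phi> X) (\<phi> (fclass (dring m) I b 1)) = \<phi> (fclass (dring m) I a 1)"
    using birational_qmul[OF X_in b_in] by simp
  moreover have "qmul (dring m) I (fclass (dring m) I b 1) (fclass (dring m) I 1 b) = fclass (dring m) I 1 1"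
    unfolding qmul_fclass[OF I' reps(2,3)]
    using b reps(4) ab(3) by (intro fclass_eqI[OF I']) (auto intro: nzd_mod_mult ideal_zero[OF I'])
  then have "qmul (dring m) J (\<phi> (fclass (dring m) I b 1)) (\<phi> (fclass (dring m) I 1 b)) = fclass (dring m) J 1 1"
    using birational_qmul[OF b_in b_inv_in] birational_one by simp
  ultimately show ?thesis
    using birational_poly_order[OF l0] ab(1,2)
    by (intro dquot_le_divide[OF J' birational_in_dquot[OF X_in] _ _ birational_in_dquot[OF b_inv_in]]) simp_all
qed

end
theorem mainTheorem5:
  fixes m :: nat
    and \<delta> :: "nat \<Rightarrow> 'f::field_char_0 \<Rightarrow> 'f"
    and I :: "('f, 'u::finite) dpoly set"
    and J :: "('f, 'v::finite) dpoly set"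
    and \<phi> :: "(('f, 'u) dpoly \<times> ('f, 'u) dpoly) set \<Rightarrow> (('f, 'v) dpoly \<times> ('f, 'v) dpoly) set"
  assumes "diff_field m \<delta>"
    and "characterizable m \<delta> I"
    and "characterizable m \<delta> J"
    and "diff_birational m \<delta> I J \<phi>"
  shows "\<exists>l0::nat. \<forall>l::nat. \<phi> ` dquot_le m I l \<subseteq> dquot_le m J (l + l0)"
proof -
  have I: "is_diff_ideal m \<delta> I" and J: "is_diff_ideal m \<delta> J"
    using assms(1-3) by (simp_all add: characterizable_is_diff_ideal)
  obtain l0 where "\<forall>v\<in>dvars m. \<phi> (fclass (dring m) I (Var v) 1) \<in> dquot_le m J (vord v + l0)"
    using birational_Var_order[OF assms(1) I J assms(4)] by auto
  then have "\<forall>l. \<phi> ` dquot_le m I l \<subseteq> dquot_le m J (l + l0)"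
    using birational_dquot_le[OF assms(1) I J assms(4)] by blast
  then show ?thesis ..
qed

end
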